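(* Let $q$ be a root of unity. A point $z=(z_0,z_1,z_\infty,\vec w)\in\mathcal Z$ is a singular point of $\mathcal Z$ if and only if one of the following holds: (1) there exist $i\in\{1,2,3,4\}$ and a representation $r:\pi_1(\Sigma_{0,4})\to SL_2(\mathbb C)$ with $r(p_i)=\pm I$ such that $z$ is a character of $r$ and $w_i\ne\pm2$; (2) $z$ is a character of a reducible representation $r:\pi_1(\Sigma_{0,4})\to SL_2(\mathbb C)$.
   Context: $\mathcal S_q(\Sigma_{0,4})$ is the Kauffman bracket skein algebra of the four-punctured sphere (punctures numbered 1–4, peripheral curves $p_i$, and curves $\alpha_0,\alpha_1,\alpha_\infty$ separating the punctures as $\{1,2\}|\{3,4\}$, $\{1,3\}|\{2,4\}$, $\{1,4\}|\{2,3\}$). For $q$ a root of unity, $N=\mathrm{ord}(q^4)$, $\epsilon=q^{N^2}$, $T_N$ the Chebyshev polynomial ($T_N(t+t^{-1})=t^N+t^{-N}$). With $A_m=\epsilon^2T_N(\alpha_m)$, $P_i=T_N(p_i)$, $C_0=P_1P_2+P_3P_4$, $C_1=P_1P_3+P_2P_4$, $C_\infty=P_1P_4+P_2P_3$, $\Gamma=P_1P_2P_3P_4+\sum_iP_i^2$ and $H(x,y,z;a,b,c,g)=x^2+y^2+z^2-xzy+ax+by+cz+g$, the center of $\mathcal S_q(\Sigma_{0,4})$ is generated by $A_0,A_1,A_\infty,p_1,\dots,p_4$ with the single relation $H(A_0,A_1,A_\infty;C_0,C_1,C_\infty,\Gamma)=4$, and $\mathcal Z$ is the corresponding hypersurface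 in $\mathbb C^7$ with coordinates $(z_0,z_1,z_\infty,w_1,\dots,w_4)$. Write $W_i=T_N(w_i)$. Loops $p_1,\dots,p_4\in\pi_1(\Sigma_{0,4})$ around the punctures satisfy $p_1p_2p_3p_4=1$, with $p_1p_2,p_1p_3,p_2p_3$ representing $\alpha_0,\alpha_1,\alpha_\infty$. A point $z\in\mathcal Z$ is a character of $r:\pi_1(\Sigma_{0,4})\to SL_2(\mathbb C)$ if $z_0=-\mathrm{tr}\,r(p_1p_2)$, $z_1=-\mathrm{tr}\,r(p_1p_3)$, $z_\infty=-\mathrm{tr}\,r(p_2p_3)$ and $W_i=-\mathrm{tr}\,r(p_i)$ for all $i$. *)

theory Defs
  imports "HOL-Analysis.Analysis"
begin

text \<open>Chebyshev polynomial T_n with T_n(t + 1/t) = t^n + t^(-n).\<close>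
fun cheb :: "nat \<Rightarrow> complex \<Rightarrow> complex" where
  "cheb 0 x = 2"
| "cheb (Suc 0) x = x"
| "cheb (Suc (Suc n)) x = x * cheb (Suc n) x - cheb n x"

definition root_of_unity :: "complex \<Rightarrow> bool" where
  "root_of_unity q \<longleftrightarrow> (\<exists>n::nat. n > 0 \<and> q ^ n = 1)"

definition ordN :: "complex \<Rightarrow> nat" where
  "ordN q = (LEAST k::nat. k > 0 \<and> (q ^ 4) ^ k = 1)"

definition Hpoly :: "complex \<Rightarrow> complex \<Rightarrow> complex \<Rightarrow> complex \<Rightarrow> complex \<Rightarrow> complex \<Rightarrow> complex \<Rightarrow> complex" where
  "Hpoly x y z a b c g = x^2 + y^2 + z^2 - x*z*y + a*x + b*y + c*z + g"

text \<open>Defining function F of the hypersurface Z in C^7: F = H(z0,z1,zinf;C0,C1,Cinf,Gamma) - 4,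
  with W_i = T_N(w_i); the w-coordinates are w 1, ..., w 4.\<close>
definition Zfun :: "nat \<Rightarrow> complex \<Rightarrow> complex \<Rightarrow> complex \<Rightarrow> (nat \<Rightarrow> complex) \<Rightarrow> complex" where
  "Zfun N z0 z1 zi w =
     (let W = (\<lambda>i. cheb N (w i)) in
      Hpoly z0 z1 zi (W 1 * W 2 + W 3 * W 4) (W 1 * W 3 + W 2 * W 4) (W 1 * W 4 + W 2 * W 3)
        (W 1 * W 2 * W 3 * W 4 + W 1 ^ 2 + W 2 ^ 2 + W 3 ^ 2 + W 4 ^ 2) - 4)"

definition inZ :: "nat \<Rightarrow> complex \<Rightarrow> complex \<Rightarrow> complex \<Rightarrow> (nat \<Rightarrow> complex) \<Rightarrow> bool" where
  "inZ N z0 z1 zi w \<longleftrightarrow> Zfun N z0 z1 zi w = 0"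

definition singular_Z :: "nat \<Rightarrow> complex \<Rightarrow> complex \<Rightarrow> complex \<Rightarrow> (nat \<Rightarrow> complex) \<Rightarrow> bool" where
  "singular_Z N z0 z1 zi w \<longleftrightarrow> inZ N z0 z1 zi w
     \<and> ((\<lambda>t. Zfun N t z1 zi w) has_field_derivative 0) (at z0)
     \<and> ((\<lambda>t. Zfun N z0 t zi w) has_field_derivative 0) (at z1)
     \<and> ((\<lambda>t. Zfun N z0 z1 t w) has_field_derivative 0) (at zi)
     \<and> (\<forall>i\<in>{1..4}. ((\<lambda>t. Zfun N z0 z1 zi (w(i := t))) has_field_derivative 0) (at (w i)))"

type_synonym mat2 = "complex ^ 2 ^ 2"

definition tr2 :: "mat2 \<Rightarrow> complex" where
  "tr2 A = A $ 1 $ 1 + A $ 2 $ 2"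

text \<open>A representation r : pi_1(Sigma_{0,4}) -> SL_2(C), pi_1 = < p1,p2,p3,p4 | p1 p2 p3 p4 = 1 >,
  is given by the images M 1, ..., M 4 of the peripheral loops.\<close>
definition is_rep :: "(nat \<Rightarrow> mat2) \<Rightarrow> bool" where
  "is_rep M \<longleftrightarrow> (\<forall>i\<in>{1..4}. det (M i) = 1) \<and> M 1 ** M 2 ** M 3 ** M 4 = mat 1"

definition reducible_rep :: "(nat \<Rightarrow> mat2) \<Rightarrow> bool" where
  "reducible_rep M \<longleftrightarrow> (\<exists>v::complex^2. v \<noteq> 0 \<and> (\<forall>i\<in>{1..4}. \<exists>c. M i *v v = c *s v))"

definition character_of :: "nat \<Rightarrow> complex \<Rightarrow> complex \<Rightarrow> complex \<Rightarrow> (nat \<Rightarrow> complex) \<Rightarrow> (nat \<Rightarrow> mat2) \<Rightarrow> bool" where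
  "character_of N z0 z1 zi w M \<longleftrightarrow>
     z0 = - tr2 (M 1 ** M 2) \<and> z1 = - tr2 (M 1 ** M 3) \<and> zi = - tr2 (M 2 ** M 3)
     \<and> (\<forall>i\<in>{1..4}. cheb N (w i) = - tr2 (M i))"

end

theory Submission
  imports Defs
begin

text \<open>In trace coordinates \<open>a\<^sub>i = tr r(p\<^sub>i)\<close>, \<open>x, y, z = tr r(p\<^sub>1p\<^sub>2), tr r(p\<^sub>1p\<^sub>3), tr r(p\<^sub>2p\<^sub>3)\<close>,
  Z is the pull-back of the Fricke cubic F under \<open>a\<^sub>i = -T\<^sub>N(w\<^sub>i)\<close>, so by the chain rule a point is
  singular iff the cubic is critical in x, y, z and, for each i, either its \<open>a\<^sub>i\<close>-derivative or
  \<open>T\<^sub>N'(w\<^sub>i)\<close> vanishes. The identity \<open>(4 - x\<^sup>2) F = -\<kappa>(a,b,x) \<kappa>(c,d,x) + (\<dots>)\<close> with the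
  commutator-trace polynomial \<open>\<kappa>\<close> shows that criticality in x, y, z forces the traces of a diagonal
  representation or of one with a generator \<open>\<plusminus>I\<close>. At a generator \<open>\<plusminus>I\<close> the \<open>a\<^sub>i\<close>-derivative vanishes
  only on the diagonal locus, while \<open>T\<^sub>N'(w\<^sub>i) = 0\<close> with \<open>T\<^sub>N(w\<^sub>i) = \<plusminus>2\<close> exactly when \<open>w\<^sub>i \<noteq> \<plusminus>2\<close>.
  Both kinds of trace data are realised by representations, and conversely reducible or
  scalar-generator representations have such traces.\<close>

section \<open>The Fricke polynomial and its singular points\<close>

text \<open>\<open>kappa (tr A) (tr B) (tr (AB)) = tr [A,B] - 2\<close> for \<open>A, B \<in> SL\<^sub>2\<close>.\<close>
definition kappa :: "complex \<Rightarrow> complex \<Rightarrow> complex \<Rightarrow> complex" where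
  "kappa u v t = u^2 + v^2 + t^2 - u * v * t - 4"

definition fricke :: "complex \<Rightarrow> complex \<Rightarrow> complex \<Rightarrow> complex \<Rightarrow> complex \<Rightarrow> complex \<Rightarrow> complex \<Rightarrow> complex" where
  "fricke a b c d x y z = x^2 + y^2 + z^2 + x*y*z - (a*b + c*d)*x - (a*c + b*d)*y - (a*d + b*c)*z
     + a*b*c*d + a^2 + b^2 + c^2 + d^2 - 4"

definition fricke_dx :: "complex \<Rightarrow> complex \<Rightarrow> complex \<Rightarrow> complex \<Rightarrow> complex \<Rightarrow> complex \<Rightarrow> complex \<Rightarrow> complex" where
  "fricke_dx a b c d x y z = 2*x + y*z - (a*b + c*d)"

definition fricke_dy :: "complex \<Rightarrow> complex \<Rightarrow> complex \<Rightarrow> complex \<Rightarrow> complex \<Rightarrow> complex \<Rightarrow> complex \<Rightarrow> complex" where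
  "fricke_dy a b c d x y z = 2*y + x*z - (a*c + b*d)"

definition fricke_dz :: "complex \<Rightarrow> complex \<Rightarrow> complex \<Rightarrow> complex \<Rightarrow> complex \<Rightarrow> complex \<Rightarrow> complex \<Rightarrow> complex" where
  "fricke_dz a b c d x y z = 2*z + x*y - (a*d + b*c)"

text \<open>The partial derivatives in b, c, d are those in a at the arguments permuted by the
  Klein four-group (b a d c), (c d a b), (d c b a), which fixes x, y, z and preserves \<open>fricke\<close>.\<close>
definition fricke_da :: "complex \<Rightarrow> complex \<Rightarrow> complex \<Rightarrow> complex \<Rightarrow> complex \<Rightarrow> complex \<Rightarrow> complex \<Rightarrow> complex" where
  "fricke_da a b c d x y z = 2*a - b*x - c*y - d*z + b*c*d"

definition fricke_xyz_critical :: "complex \<Rightarrow> complex \<Rightarrow> complex \<Rightarrow> complex \<Rightarrow> complex \<Rightarrow> complex \<Rightarrow> complex \<Rightarrow> bool" where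
  "fricke_xyz_critical a b c d x y z \<longleftrightarrow> fricke a b c d x y z = 0 \<and> fricke_dx a b c d x y z = 0
     \<and> fricke_dy a b c d x y z = 0 \<and> fricke_dz a b c d x y z = 0"

text \<open>Traces of a diagonal representation with eigenvalues \<open>\<alpha>, \<beta>, \<gamma>, (\<alpha>\<beta>\<gamma>)\<^sup>-\<^sup>1\<close>.\<close>
definition reducible_traces :: "complex \<Rightarrow> complex \<Rightarrow> complex \<Rightarrow> complex \<Rightarrow> complex \<Rightarrow> complex \<Rightarrow> complex \<Rightarrow> bool" where
  "reducible_traces a b c d x y z \<longleftrightarrow> (\<exists>\<alpha> \<beta> \<gamma>. \<alpha> \<noteq> 0 \<and> \<beta> \<noteq> 0 \<and> \<gamma> \<noteq> 0 \<and>
     a = \<alpha> + 1/\<alpha> \<and> b = \<beta> + 1/\<beta> \<and> c = \<gamma> + 1/\<gamma> \<and> d = \<alpha>*\<beta>*\<gamma> + 1/(\<alpha>*\<beta>*\<gamma>) \<and>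
     x = \<alpha>*\<beta> + 1/(\<alpha>*\<beta>) \<and> y = \<alpha>*\<gamma> + 1/(\<alpha>*\<gamma>) \<and> z = \<beta>*\<gamma> + 1/(\<beta>*\<gamma>))"

text \<open>Traces of a representation whose first generator is the scalar \<open>e I\<close>, \<open>e = \<plusminus>1\<close>;
  the Klein-permuted instances describe a scalar second, third or fourth generator.\<close>
definition scalar_at_1 :: "complex \<Rightarrow> complex \<Rightarrow> complex \<Rightarrow> complex \<Rightarrow> complex \<Rightarrow> complex \<Rightarrow> complex \<Rightarrow> bool" where
  "scalar_at_1 a b c d x y z \<longleftrightarrow> (\<exists>e. (e = 1 \<or> e = -1) \<and> a = 2*e \<and> x = e*b \<and> y = e*c \<and> z = e*d)"

definition singular_traces :: "complex \<Rightarrow> complex \<Rightarrow> complex \<Rightarrow> complex \<Rightarrow> complex \<Rightarrow> complex \<Rightarrow> complex \<Rightarrow> bool" where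
  "singular_traces a b c d x y z \<longleftrightarrow> reducible_traces a b c d x y z
     \<or> scalar_at_1 a b c d x y z \<or> scalar_at_1 b a d c x y z
     \<or> scalar_at_1 c d a b x y z \<or> scalar_at_1 d c b a x y z"

lemma square_eq_4_iff: "(a::complex)^2 = 4 \<longleftrightarrow> a = 2 \<or> a = -2"
proof -
  have "a^2 - 4 = (a - 2) * (a + 2)" by (simp add: algebra_simps power2_eq_square)
  thus ?thesis by (auto simp: eq_neg_iff_add_eq_0)
qed

lemma ex_plus_inverse: "\<exists>t::complex. t \<noteq> 0 \<and> w = t + 1/t"
proof -
  define s where "s = csqrt (w^2 - 4)"
  have s2: "s^2 = w^2 - 4" unfolding s_def by simp
  define t where "t = (w + s)/2"
  have tt: "t * ((w - s)/2) = 1" unfolding t_def using s2 by (simp add: field_simps power2_eq_square)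
  hence "t \<noteq> 0" by auto
  moreover have "1/t = (w - s)/2" using tt \<open>t \<noteq> 0\<close> by (simp add: field_simps)
  moreover have "t + (w - s)/2 = w" unfolding t_def by (simp add: field_simps)
  ultimately show ?thesis by metis
qed

text \<open>With \<open>a = \<alpha> + \<alpha>\<^sup>-\<^sup>1\<close> and \<open>b = \<beta> + \<beta>\<^sup>-\<^sup>1\<close>, \<open>kappa a b\<close> vanishes exactly at
  \<open>t = \<alpha>\<beta> + (\<alpha>\<beta>)\<^sup>-\<^sup>1\<close> and \<open>t = \<alpha>\<beta>\<^sup>-\<^sup>1 + \<alpha>\<^sup>-\<^sup>1\<beta>\<close>; replacing \<open>\<beta>\<close> by \<open>\<beta>\<^sup>-\<^sup>1\<close> swaps the roots.\<close>
lemma kappa_eq_0_param: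
  assumes "kappa a b t = 0" "\<alpha> \<noteq> 0" "a = \<alpha> + 1/\<alpha>"
  shows "\<exists>\<beta>. \<beta> \<noteq> 0 \<and> b = \<beta> + 1/\<beta> \<and> t = \<alpha>*\<beta> + 1/(\<alpha>*\<beta>)"
proof -
  obtain \<beta> where b: "\<beta> \<noteq> 0" "b = \<beta> + 1/\<beta>" using ex_plus_inverse by blast
  have "kappa a b t = (t - (\<alpha>*\<beta> + 1/(\<alpha>*\<beta>))) * (t - (\<alpha>/\<beta> + \<beta>/\<alpha>))"
    unfolding kappa_def assms(3) b(2) using b(1) assms(2) by (simp add: field_simps) algebra
  hence "t = \<alpha>*\<beta> + 1/(\<alpha>*\<beta>) \<or> t = \<alpha>/\<beta> + \<beta>/\<alpha>" using assms(1) by simp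
  thus ?thesis
  proof
    assume "t = \<alpha>*\<beta> + 1/(\<alpha>*\<beta>)"
    thus ?thesis using b by blast
  next
    assume "t = \<alpha>/\<beta> + \<beta>/\<alpha>"
    thus ?thesis by (intro exI[of _ "1/\<beta>"]) (use b assms(2) in \<open>simp add: field_simps\<close>)
  qed
qed

lemma kappa_at_pm2: "e*e = 1 \<Longrightarrow> kappa u v (2*e) = (u - e * v)^2"
  unfolding kappa_def by algebra

text \<open>\<open>(4 - x\<^sup>2) fricke\<close> splits off the product of the \<open>kappa\<close>s of the pairs \<open>{1,2}\<close> and \<open>{3,4}\<close>.\<close>
lemma kappa_mult_kappa_eq_0:
  assumes "fricke_xyz_critical a b c d x y z"
  shows "kappa a b x * kappa c d x = 0"
proof -
  have "(4 - x^2) * fricke a b c d x y z = - kappa a b x * kappa c d x + (fricke_dy a b c d x y z)^2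
      + (fricke_dz a b c d x y z)^2 - x * fricke_dy a b c d x y z * fricke_dz a b c d x y z"
    unfolding fricke_def kappa_def fricke_dy_def fricke_dz_def by algebra
  thus ?thesis using assms unfolding fricke_xyz_critical_def by simp
qed

lemma fricke_xyz_critical_cdab:
  "fricke_xyz_critical c d a b x y z \<longleftrightarrow> fricke_xyz_critical a b c d x y z"
  unfolding fricke_xyz_critical_def fricke_def fricke_dx_def fricke_dy_def fricke_dz_def
  by (auto simp: algebra_simps)

lemma fricke_xyz_critical_badc:
  "fricke_xyz_critical b a d c x y z \<longleftrightarrow> fricke_xyz_critical a b c d x y z"
  unfolding fricke_xyz_critical_def fricke_def fricke_dx_def fricke_dy_def fricke_dz_def
  by (auto simp: algebra_simps)

lemma fricke_xyz_critical_acbd: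
  "fricke_xyz_critical a c b d y x z \<longleftrightarrow> fricke_xyz_critical a b c d x y z"
  unfolding fricke_xyz_critical_def fricke_def fricke_dx_def fricke_dy_def fricke_dz_def
  by (auto simp: algebra_simps)

lemma fricke_xyz_critical_adcb:
  "fricke_xyz_critical a d c b z y x \<longleftrightarrow> fricke_xyz_critical a b c d x y z"
  unfolding fricke_xyz_critical_def fricke_def fricke_dx_def fricke_dy_def fricke_dz_def
  by (auto simp: algebra_simps)

lemma reducible_traces_perm_cdab:
  assumes "reducible_traces c d a b x y z"
  shows "reducible_traces a b c d x y z"
proof -
  obtain \<alpha> \<beta> \<gamma> where h: "\<alpha> \<noteq> 0" "\<beta> \<noteq> 0" "\<gamma> \<noteq> 0"
    "c = \<alpha> + 1/\<alpha>" "d = \<beta> + 1/\<beta>" "a = \<gamma> + 1/\<gamma>" "b = \<alpha>*\<beta>*\<gamma> + 1/(\<alpha>*\<beta>*\<gamma>)"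
    "x = \<alpha>*\<beta> + 1/(\<alpha>*\<beta>)" "y = \<alpha>*\<gamma> + 1/(\<alpha>*\<gamma>)" "z = \<beta>*\<gamma> + 1/(\<beta>*\<gamma>)"
    using assms unfolding reducible_traces_def by blast
  show ?thesis unfolding reducible_traces_def
    by (rule exI[of _ \<gamma>], rule exI[of _ "1/(\<alpha>*\<beta>*\<gamma>)"], rule exI[of _ \<alpha>])
      (use h in \<open>simp add: field_simps\<close>)
qed

lemma reducible_traces_perm_badc:
  assumes "reducible_traces b a d c x y z"
  shows "reducible_traces a b c d x y z"
proof -
  obtain \<alpha> \<beta> \<gamma> where h: "\<alpha> \<noteq> 0" "\<beta> \<noteq> 0" "\<gamma> \<noteq> 0"
    "b = \<alpha> + 1/\<alpha>" "a = \<beta> + 1/\<beta>" "d = \<gamma> + 1/\<gamma>" "c = \<alpha>*\<beta>*\<gamma> + 1/(\<alpha>*\<beta>*\<gamma>)"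
    "x = \<alpha>*\<beta> + 1/(\<alpha>*\<beta>)" "y = \<alpha>*\<gamma> + 1/(\<alpha>*\<gamma>)" "z = \<beta>*\<gamma> + 1/(\<beta>*\<gamma>)"
    using assms unfolding reducible_traces_def by blast
  show ?thesis unfolding reducible_traces_def
    by (rule exI[of _ \<beta>], rule exI[of _ \<alpha>], rule exI[of _ "1/(\<alpha>*\<beta>*\<gamma>)"])
      (use h in \<open>simp add: field_simps\<close>)
qed

lemma reducible_traces_perm_acbd:
  assumes "reducible_traces a c b d y x z"
  shows "reducible_traces a b c d x y z"
proof -
  obtain \<alpha> \<beta> \<gamma> where h: "\<alpha> \<noteq> 0" "\<beta> \<noteq> 0" "\<gamma> \<noteq> 0"
    "a = \<alpha> + 1/\<alpha>" "c = \<beta> + 1/\<beta>" "b = \<gamma> + 1/\<gamma>" "d = \<alpha>*\<beta>*\<gamma> + 1/(\<alpha>*\<beta>*\<gamma>)"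
    "y = \<alpha>*\<beta> + 1/(\<alpha>*\<beta>)" "x = \<alpha>*\<gamma> + 1/(\<alpha>*\<gamma>)" "z = \<beta>*\<gamma> + 1/(\<beta>*\<gamma>)"
    using assms unfolding reducible_traces_def by blast
  show ?thesis unfolding reducible_traces_def
    by (rule exI[of _ \<alpha>], rule exI[of _ \<gamma>], rule exI[of _ \<beta>]) (use h in \<open>simp add: field_simps\<close>)
qed

lemma reducible_traces_perm_adcb:
  assumes "reducible_traces a d c b z y x"
  shows "reducible_traces a b c d x y z"
proof -
  obtain \<alpha> \<beta> \<gamma> where h: "\<alpha> \<noteq> 0" "\<beta> \<noteq> 0" "\<gamma> \<noteq> 0"
    "a = \<alpha> + 1/\<alpha>" "d = \<beta> + 1/\<beta>" "c = \<gamma> + 1/\<gamma>" "b = \<alpha>*\<beta>*\<gamma> + 1/(\<alpha>*\<beta>*\<gamma>)"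
    "z = \<alpha>*\<beta> + 1/(\<alpha>*\<beta>)" "y = \<alpha>*\<gamma> + 1/(\<alpha>*\<gamma>)" "x = \<beta>*\<gamma> + 1/(\<beta>*\<gamma>)"
    using assms unfolding reducible_traces_def by blast
  show ?thesis unfolding reducible_traces_def
    by (rule exI[of _ \<alpha>], rule exI[of _ "1/(\<alpha>*\<beta>*\<gamma>)"], rule exI[of _ \<gamma>])
      (use h in \<open>simp add: field_simps\<close>)
qed

lemma scalar_at_1_swap_xy: "scalar_at_1 p q r s y x z \<longleftrightarrow> scalar_at_1 p r q s x y z"
  unfolding scalar_at_1_def by blast

lemma scalar_at_1_swap_xz: "scalar_at_1 p q r s z y x \<longleftrightarrow> scalar_at_1 p s r q x y z"
  unfolding scalar_at_1_def by blast

lemma singular_traces_perm_cdab: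
  "singular_traces c d a b x y z \<Longrightarrow> singular_traces a b c d x y z"
  unfolding singular_traces_def using reducible_traces_perm_cdab[of c d a b x y z] by blast

lemma singular_traces_perm_badc:
  "singular_traces b a d c x y z \<Longrightarrow> singular_traces a b c d x y z"
  unfolding singular_traces_def using reducible_traces_perm_badc[of b a d c x y z] by blast

lemma singular_traces_perm_acbd:
  "singular_traces a c b d y x z \<Longrightarrow> singular_traces a b c d x y z"
  unfolding singular_traces_def
  using reducible_traces_perm_acbd[of a c b d y x z] scalar_at_1_swap_xy[of a c b d y x z]
    scalar_at_1_swap_xy[of c a d b y x z] scalar_at_1_swap_xy[of b d a c y x z]
    scalar_at_1_swap_xy[of d b c a y x z]
  by blast

lemma singular_traces_perm_adcb:
  "singular_traces a d c b z y x \<Longrightarrow> singular_traces a b c d x y z"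
  unfolding singular_traces_def
  using reducible_traces_perm_adcb[of a d c b z y x] scalar_at_1_swap_xz[of a d c b z y x]
    scalar_at_1_swap_xz[of d a b c z y x] scalar_at_1_swap_xz[of c b a d z y x]
    scalar_at_1_swap_xz[of b c d a z y x]
  by blast

text \<open>Write \<open>a = \<alpha> + \<alpha>\<^sup>-\<^sup>1\<close>, \<open>b = \<beta> + \<beta>\<^sup>-\<^sup>1\<close>, \<open>x = \<alpha>\<beta> + (\<alpha>\<beta>)\<^sup>-\<^sup>1\<close> and \<open>P = \<alpha>\<beta> - (\<alpha>\<beta>)\<^sup>-\<^sup>1\<close>.
  The equations in y and z solve for \<open>P y\<close> and \<open>P z\<close>, after which the equation in x becomes
  \<open>(\<alpha> - \<alpha>\<^sup>-\<^sup>1)(\<beta> - \<beta>\<^sup>-\<^sup>1) kappa c d x = 0\<close>.\<close>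
lemma singular_traces_of_kappa_12:
  assumes crit: "fricke_xyz_critical a b c d x y z"
    and x4: "x^2 \<noteq> 4" and k: "kappa a b x = 0"
  shows "reducible_traces a b c d x y z \<or> scalar_at_1 a b c d x y z \<or> scalar_at_1 b a d c x y z"
proof -
  have Fx: "fricke_dx a b c d x y z = 0" and Fy: "fricke_dy a b c d x y z = 0"
    and Fz: "fricke_dz a b c d x y z = 0"
    using crit unfolding fricke_xyz_critical_def by auto
  obtain \<alpha> where al: "\<alpha> \<noteq> 0" "a = \<alpha> + 1/\<alpha>" using ex_plus_inverse by blast
  obtain \<beta> where be: "\<beta> \<noteq> 0" "b = \<beta> + 1/\<beta>" "x = \<alpha>*\<beta> + 1/(\<alpha>*\<beta>)"
    using kappa_eq_0_param[OF k al] by blast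
  define P where "P = \<alpha>*\<beta> - 1/(\<alpha>*\<beta>)"
  define ua where "ua = \<alpha> - 1/\<alpha>"
  define ub where "ub = \<beta> - 1/\<beta>"
  have P2: "P^2 = x^2 - 4"
    unfolding P_def be(3) using al(1) be(1) by (simp add: field_simps power2_eq_square)
  have P0: "P \<noteq> 0" using P2 x4 by auto
  have hy: "(4 - x^2)*y = 2*(a*c + b*d) - x*(a*d + b*c)"
    and hz: "(4 - x^2)*z = 2*(a*d + b*c) - x*(a*c + b*d)"
    using Fy Fz unfolding fricke_dy_def fricke_dz_def by algebra+
  have "2*(a*c + b*d) - x*(a*d + b*c) = -P*(c*ub + d*ua)"
    and "2*(a*d + b*c) - x*(a*c + b*d) = -P*(c*ua + d*ub)"
    unfolding P_def ua_def ub_def al(2) be(2) be(3) using al(1) be(1) by (simp_all add: field_simps)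
  with hy hz P2 have "P*(P*y) = P*(c*ub + d*ua)" and "P*(P*z) = P*(c*ua + d*ub)"
    by algebra+
  hence Py: "P*y = c*ub + d*ua" and Pz: "P*z = c*ua + d*ub" using P0 by simp_all
  have e3: "2*x - a*b = ua*ub"
    unfolding ua_def ub_def al(2) be(2) be(3) using al(1) be(1) by (simp add: field_simps)
  have e4: "ua^2 + ub^2 - P^2 = - ua*ub*x"
    unfolding P_def ua_def ub_def be(3) using al(1) be(1) by (simp add: field_simps) algebra
  have "P^2 * fricke_dx a b c d x y z = P^2*(2*x - a*b) - P^2*c*d + (P*y)*(P*z)"
    unfolding fricke_dx_def by (simp add: algebra_simps power2_eq_square)
  also have "\<dots> = ua*ub*kappa c d x"
    unfolding Py Pz e3 kappa_def using e4 P2 by (simp add: algebra_simps power2_eq_square) algebra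
  finally have "ua = 0 \<or> ub = 0 \<or> kappa c d x = 0" using Fx by simp
  moreover have "scalar_at_1 a b c d x y z" if "ua = 0"
  proof -
    have e: "\<alpha> = 1 \<or> \<alpha> = -1"
      using \<open>ua = 0\<close> al(1) unfolding ua_def by (simp add: field_simps power2_eq_square square_eq_1_iff)
    hence ia: "1/\<alpha> = \<alpha>" and aa: "\<alpha>*\<alpha> = 1" by auto
    have Pe: "P = \<alpha>*ub" unfolding P_def ub_def using ia al(1) be(1) by (simp add: field_simps)
    hence "ub \<noteq> 0" using P0 by auto
    hence "\<alpha>*y = c" "\<alpha>*z = d" using Py Pz \<open>ua = 0\<close> Pe by (simp_all add: algebra_simps)
    hence "y = \<alpha>*c" "z = \<alpha>*d" using aa by (metis mult.assoc mult_1)+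
    moreover have "a = 2*\<alpha>" using al(2) ia by simp
    moreover have "x = \<alpha>*b" using be(2,3) ia aa al(1) be(1) by (simp add: field_simps) algebra
    ultimately show ?thesis unfolding scalar_at_1_def using e by blast
  qed
  moreover have "scalar_at_1 b a d c x y z" if "ub = 0"
  proof -
    have e: "\<beta> = 1 \<or> \<beta> = -1"
      using \<open>ub = 0\<close> be(1) unfolding ub_def by (simp add: field_simps power2_eq_square square_eq_1_iff)
    hence ib: "1/\<beta> = \<beta>" and bb: "\<beta>*\<beta> = 1" by auto
    have Pe: "P = \<beta>*ua" unfolding P_def ua_def using ib al(1) be(1) by (simp add: field_simps)
    hence "ua \<noteq> 0" using P0 by auto
    hence "\<beta>*y = d" "\<beta>*z = c" using Py Pz \<open>ub = 0\<close> Pe by (simp_all add: algebra_simps)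
    hence "y = \<beta>*d" "z = \<beta>*c" using bb by (metis mult.assoc mult_1)+
    moreover have "b = 2*\<beta>" using be(2) ib by simp
    moreover have "x = \<beta>*a" using al(2) be(3) ib bb al(1) be(1) by (simp add: field_simps) algebra
    ultimately show ?thesis unfolding scalar_at_1_def using e by blast
  qed
  moreover have "reducible_traces a b c d x y z" if "kappa c d x = 0"
  proof -
    have "kappa x c d = 0" using that unfolding kappa_def by (simp add: algebra_simps)
    moreover have "\<alpha>*\<beta> \<noteq> 0" using al(1) be(1) by simp
    ultimately obtain \<gamma> where ga: "\<gamma> \<noteq> 0" "c = \<gamma> + 1/\<gamma>" "d = (\<alpha>*\<beta>)*\<gamma> + 1/((\<alpha>*\<beta>)*\<gamma>)"
      using kappa_eq_0_param be(3) by blast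
    have "P*(\<alpha>*\<gamma> + 1/(\<alpha>*\<gamma>)) = c*ub + d*ua" and "P*(\<beta>*\<gamma> + 1/(\<beta>*\<gamma>)) = c*ua + d*ub"
      unfolding P_def ua_def ub_def ga(2,3) using al(1) be(1) ga(1) by (simp_all add: field_simps)
    hence yz: "y = \<alpha>*\<gamma> + 1/(\<alpha>*\<gamma>)" "z = \<beta>*\<gamma> + 1/(\<beta>*\<gamma>)"
      using Py Pz P0 by (metis mult_left_cancel)+
    show ?thesis unfolding reducible_traces_def
      by (rule exI[of _ \<alpha>], rule exI[of _ \<beta>], rule exI[of _ \<gamma>]) (use al be ga yz in auto)
  qed
  ultimately show ?thesis by blast
qed

lemma singular_traces_of_x_ne_pm2:
  assumes crit: "fricke_xyz_critical a b c d x y z" and x4: "x^2 \<noteq> 4"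
  shows "singular_traces a b c d x y z"
proof -
  have "kappa a b x = 0 \<or> kappa c d x = 0" using kappa_mult_kappa_eq_0[OF crit] by simp
  thus ?thesis
  proof
    assume "kappa a b x = 0"
    thus ?thesis using singular_traces_of_kappa_12[OF crit x4] unfolding singular_traces_def by blast
  next
    assume "kappa c d x = 0"
    moreover note fricke_xyz_critical_cdab[THEN iffD2, OF crit]
    ultimately have "singular_traces c d a b x y z"
      using singular_traces_of_kappa_12 x4 unfolding singular_traces_def by blast
    thus ?thesis by (rule singular_traces_perm_cdab)
  qed
qed

lemma reducible_traces_at_0:
  assumes "e1 = 1 \<or> e1 = -1" "e2 = 1 \<or> e2 = -1" "e3 = -e1*e2"
  shows "reducible_traces 0 0 0 0 (2*e1) (2*e2) (2*e3)"
  unfolding reducible_traces_def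
  by (rule exI[of _ \<i>], rule exI[of _ "-e1*\<i>"], rule exI[of _ "-e2*\<i>"]) (use assms in auto)

text \<open>When \<open>x, y, z = \<plusminus>2\<close>, each \<open>kappa\<close>-factorisation forces one of two linear relations
  among a, b, c, d; up to symmetry the relations can be chosen as in the hypotheses here.\<close>
lemma singular_traces_of_pm2_normalized:
  assumes crit: "fricke_xyz_critical a b c d x y z"
    and e: "e1 = 1 \<or> e1 = -1" "e2 = 1 \<or> e2 = -1" "e3 = 1 \<or> e3 = -1"
    and xyz: "x = 2*e1" "y = 2*e2" "z = 2*e3"
    and b: "b = e1*a" and c: "c = e2*a" and h3: "d = e3*a \<or> b = e3*c"
  shows "singular_traces a b c d x y z"
proof -
  have F: "fricke a b c d x y z = 0" "fricke_dx a b c d x y z = 0" "fricke_dz a b c d x y z = 0"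
    using crit unfolding fricke_xyz_critical_def by auto
  have ee: "e1*e1 = 1" "e2*e2 = 1" "e3*e3 = 1" using e by auto
  have scalar: "scalar_at_1 a b c d x y z" if "a^2 = 4" and d: "d = e3*a"
  proof -
    define \<epsilon> where "\<epsilon> = a/2"
    have ep: "\<epsilon> = 1 \<or> \<epsilon> = -1" "a = 2*\<epsilon>"
      using that(1) unfolding \<epsilon>_def square_eq_4_iff by auto
    hence "\<epsilon>*\<epsilon> = 1" by auto
    hence "x = \<epsilon>*b" "y = \<epsilon>*c" "z = \<epsilon>*d" using xyz b c d ep(2) ee by algebra+
    thus ?thesis unfolding scalar_at_1_def using ep by blast
  qed
  from h3 show ?thesis
  proof
    assume d: "d = e3*a"
    have "a^2 * (a^2 - 4)^2 = 0" using F(1) ee unfolding fricke_def xyz b c d by algebra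
    hence "a = 0 \<or> a^2 = 4" by auto
    thus ?thesis
    proof
      assume a0: "a = 0"
      have "8 + 8*(e1*e2*e3) = 0" using F(1) ee a0 unfolding fricke_def xyz b c d by algebra
      hence "e3 = -e1*e2" using ee by algebra
      thus ?thesis using reducible_traces_at_0[OF e(1,2)] a0 b c d xyz
        unfolding singular_traces_def by simp
    qed (use scalar d in \<open>auto simp: singular_traces_def\<close>)
  next
    assume "b = e3*c"
    hence "a*(e1 - e2*e3) = 0" using b c by (simp add: algebra_simps)
    hence "a = 0 \<or> e1 = e2*e3" by auto
    thus ?thesis
    proof
      assume a0: "a = 0"
      have "4*e1 + 4*e2*e3 = 0" using F(2) a0 unfolding fricke_dx_def xyz b c by algebra
      hence e3: "e3 = -e1*e2" using ee by algebra
      have "d^2 = 0" using F(1) ee e3 a0 unfolding fricke_def xyz b c by algebra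
      thus ?thesis using reducible_traces_at_0[OF e(1,2)] e3 a0 b c xyz
        unfolding singular_traces_def by simp
    next
      assume e1: "e1 = e2*e3"
      have "a \<noteq> 0"
      proof
        assume "a = 0"
        hence "4*e1 + 4*e2*e3 = 0" using F(2) unfolding fricke_dx_def xyz b c by algebra
        thus False using e1 ee by algebra
      qed
      have ad: "a*d = e3*(8 - a^2)" using F(3) ee e1 unfolding fricke_dz_def xyz b c by algebra
      have "a^2 * fricke a b c d x y z = - ((a^2 - 4)^3)"
        using ad ee e1 unfolding fricke_def xyz b c by algebra
      hence a4: "a^2 = 4" using F(1) by simp
      hence "a*d = a*(e3*a)" using ad by (simp add: algebra_simps power2_eq_square)
      hence "d = e3*a" using \<open>a \<noteq> 0\<close> by simp
      thus ?thesis using scalar a4 unfolding singular_traces_def by blast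
    qed
  qed
qed

lemma singular_traces_of_xyz_pm2:
  assumes crit: "fricke_xyz_critical a b c d x y z"
    and x4: "x^2 = 4" and y4: "y^2 = 4" and z4: "z^2 = 4"
  shows "singular_traces a b c d x y z"
proof -
  obtain e1 e2 e3 where e: "e1 = 1 \<or> e1 = -1" "e2 = 1 \<or> e2 = -1" "e3 = 1 \<or> e3 = -1"
    and xyz: "x = 2*e1" "y = 2*e2" "z = 2*e3"
    using x4 y4 z4 unfolding square_eq_4_iff by (metis mult.right_neutral mult_minus_right)
  have ee: "e1*e1 = 1" "e2*e2 = 1" "e3*e3 = 1" using e by auto
  have flip: "u = e * v \<longleftrightarrow> v = e * u" if "e*e = 1" for u v e :: complex
    using that by (metis mult.assoc mult_1)
  note crit' = fricke_xyz_critical_acbd[THEN iffD2, OF crit]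
    fricke_xyz_critical_adcb[THEN iffD2, OF crit]
    fricke_xyz_critical_badc[THEN iffD2, OF crit]
    fricke_xyz_critical_cdab[THEN iffD2, OF crit]
    fricke_xyz_critical_cdab[THEN iffD2, OF fricke_xyz_critical_badc[THEN iffD2, OF crit]]
  have "a = e1*b \<or> c = e1*d"
    using kappa_mult_kappa_eq_0[OF crit] kappa_at_pm2[OF ee(1)] xyz(1) by auto
  hence D1: "b = e1*a \<or> d = e1*c" using flip[OF ee(1), of a b] flip[OF ee(1), of c d] by blast
  have "a = e2*c \<or> b = e2*d"
    using kappa_mult_kappa_eq_0[OF crit'(1)] kappa_at_pm2[OF ee(2)] xyz(2) by auto
  hence D2: "c = e2*a \<or> d = e2*b" using flip[OF ee(2), of a c] flip[OF ee(2), of b d] by blast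
  have D3: "a = e3*d \<or> c = e3*b"
    using kappa_mult_kappa_eq_0[OF crit'(2)] kappa_at_pm2[OF ee(3)] xyz(3) by auto
  hence D3': "d = e3*a \<or> b = e3*c" using flip[OF ee(3), of a d] flip[OF ee(3), of c b] by blast
  from D1 D2 consider "b = e1*a" "c = e2*a" | "b = e1*a" "d = e2*b" | "d = e1*c" "c = e2*a"
    | "d = e1*c" "d = e2*b"
    by blast
  thus ?thesis
  proof cases
    case 1
    thus ?thesis using singular_traces_of_pm2_normalized[OF crit e xyz _ _ D3'] by blast
  next
    case 2
    have "a = e1*b" using 2(1) flip[OF ee(1), of a b] by blast
    hence "singular_traces b a d c x y z"
      using singular_traces_of_pm2_normalized[OF crit'(3) e xyz _ 2(2)] D3 by blast
    thus ?thesis by (rule singular_traces_perm_badc)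
  next
    case 3
    have "a = e2*c" using 3(2) flip[OF ee(2), of a c] by blast
    hence "singular_traces c d a b x y z"
      using singular_traces_of_pm2_normalized[OF crit'(4) e xyz 3(1)] D3' by blast
    thus ?thesis by (rule singular_traces_perm_cdab)
  next
    case 4
    have "c = e1*d" "b = e2*d"
      using 4 flip[OF ee(1), of c d] flip[OF ee(2), of b d] by blast+
    hence "singular_traces d c b a x y z"
      using singular_traces_of_pm2_normalized[OF crit'(5) e xyz] D3 by blast
    hence "singular_traces b a d c x y z" by (rule singular_traces_perm_cdab)
    thus ?thesis by (rule singular_traces_perm_badc)
  qed
qed

lemma singular_traces_of_xyz_critical:
  assumes crit: "fricke_xyz_critical a b c d x y z"
  shows "singular_traces a b c d x y z"
proof (cases "x^2 = 4 \<and> y^2 = 4 \<and> z^2 = 4")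
  case True
  thus ?thesis using singular_traces_of_xyz_pm2[OF crit] by blast
next
  case False
  moreover have ?thesis if "y^2 \<noteq> 4"
    using singular_traces_of_x_ne_pm2[OF fricke_xyz_critical_acbd[THEN iffD2, OF crit] that]
    by (rule singular_traces_perm_acbd)
  moreover have ?thesis if "z^2 \<noteq> 4"
    using singular_traces_of_x_ne_pm2[OF fricke_xyz_critical_adcb[THEN iffD2, OF crit] that]
    by (rule singular_traces_perm_adcb)
  ultimately show ?thesis using singular_traces_of_x_ne_pm2[OF crit] by blast
qed

lemma reducible_traces_critical:
  assumes "reducible_traces a b c d x y z"
  shows "fricke a b c d x y z = 0 \<and> fricke_dx a b c d x y z = 0 \<and> fricke_dy a b c d x y z = 0
    \<and> fricke_dz a b c d x y z = 0 \<and> fricke_da a b c d x y z = 0 \<and> fricke_da b a d c x y z = 0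
    \<and> fricke_da c d a b x y z = 0 \<and> fricke_da d c b a x y z = 0"
proof -
  obtain \<alpha> \<beta> \<gamma> where h: "\<alpha> \<noteq> 0" "\<beta> \<noteq> 0" "\<gamma> \<noteq> 0"
    "a = \<alpha> + 1/\<alpha>" "b = \<beta> + 1/\<beta>" "c = \<gamma> + 1/\<gamma>" "d = \<alpha>*\<beta>*\<gamma> + 1/(\<alpha>*\<beta>*\<gamma>)"
    "x = \<alpha>*\<beta> + 1/(\<alpha>*\<beta>)" "y = \<alpha>*\<gamma> + 1/(\<alpha>*\<gamma>)" "z = \<beta>*\<gamma> + 1/(\<beta>*\<gamma>)"
    using assms unfolding reducible_traces_def by blast
  define p q r where "p = 1/\<alpha>" and "q = 1/\<beta>" and "r = 1/\<gamma>"
  have inv: "\<alpha>*p = 1" "\<beta>*q = 1" "\<gamma>*r = 1" using h(1-3) unfolding p_def q_def r_def by auto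
  have "a = \<alpha> + p" "b = \<beta> + q" "c = \<gamma> + r" "d = \<alpha>*\<beta>*\<gamma> + p*q*r"
    "x = \<alpha>*\<beta> + p*q" "y = \<alpha>*\<gamma> + p*r" "z = \<beta>*\<gamma> + q*r"
    using h(4-10) unfolding p_def q_def r_def by auto
  thus ?thesis
    unfolding fricke_def fricke_dx_def fricke_dy_def fricke_dz_def fricke_da_def using inv
    by (intro conjI) algebra+
qed

text \<open>At a scalar first generator the a-derivative is \<open>kappa b c (e d)\<close>.\<close>
lemma reducible_traces_of_scalar_at_1:
  assumes "scalar_at_1 a b c d x y z" "fricke_da a b c d x y z = 0"
  shows "reducible_traces a b c d x y z"
proof -
  obtain e where e: "e = 1 \<or> e = -1" "a = 2*e" "x = e*b" "y = e*c" "z = e*d"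
    using assms(1) unfolding scalar_at_1_def by blast
  have ee: "e*e = 1" "1/e = e" using e(1) by auto
  have "kappa b c (e*d) = 0" using assms(2) e ee(1) unfolding fricke_da_def kappa_def by algebra
  moreover obtain \<beta> where be: "\<beta> \<noteq> 0" "b = \<beta> + 1/\<beta>" using ex_plus_inverse by blast
  ultimately obtain \<gamma> where ga: "\<gamma> \<noteq> 0" "c = \<gamma> + 1/\<gamma>" "e*d = \<beta>*\<gamma> + 1/(\<beta>*\<gamma>)"
    using kappa_eq_0_param by blast
  have inv: "1/(e*t) = e*(1/t)" for t using e(1) by auto
  have "a = e + 1/e" using e(2) ee(2) by simp
  moreover have "d = e*\<beta>*\<gamma> + 1/(e*\<beta>*\<gamma>)"
    using ga(3) ee(1) inv[of "\<beta>*\<gamma>"] by (metis mult.assoc mult_1 distrib_left)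
  moreover have "x = e*\<beta> + 1/(e*\<beta>)" using e(3) be(2) inv[of \<beta>] by (simp add: algebra_simps)
  moreover have "y = e*\<gamma> + 1/(e*\<gamma>)" using e(4) ga(2) inv[of \<gamma>] by (simp add: algebra_simps)
  moreover have "z = \<beta>*\<gamma> + 1/(\<beta>*\<gamma>)" using e(5) ga(3) ee(1) by (metis mult.assoc mult_1)
  moreover have "e \<noteq> 0" using e(1) by auto
  ultimately show ?thesis unfolding reducible_traces_def using be ga(1,2) by blast
qed

text \<open>The \<open>k\<^sub>i\<close> stand for the derivatives of the change of variables in the i-th trace coordinate.\<close>
lemma fricke_critical_iff:
  assumes "fricke a b c d x y z = 0"
  shows "fricke_dx a b c d x y z = 0 \<and> fricke_dy a b c d x y z = 0 \<and> fricke_dz a b c d x y z = 0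
      \<and> fricke_da a b c d x y z * k\<^sub>1 = 0 \<and> fricke_da b a d c x y z * k\<^sub>2 = 0
      \<and> fricke_da c d a b x y z * k\<^sub>3 = 0 \<and> fricke_da d c b a x y z * k\<^sub>4 = 0
    \<longleftrightarrow> reducible_traces a b c d x y z
      \<or> scalar_at_1 a b c d x y z \<and> k\<^sub>1 = 0 \<or> scalar_at_1 b a d c x y z \<and> k\<^sub>2 = 0
      \<or> scalar_at_1 c d a b x y z \<and> k\<^sub>3 = 0 \<or> scalar_at_1 d c b a x y z \<and> k\<^sub>4 = 0"
    (is "?crit \<longleftrightarrow> ?classes")
proof
  assume crit: ?crit
  have vertex: "reducible_traces p q r s x y z \<or> scalar_at_1 p q r s x y z \<and> k = 0"
    if "scalar_at_1 p q r s x y z" "fricke_da p q r s x y z * k = 0" for p q r s k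
    using that reducible_traces_of_scalar_at_1 by auto
  have "singular_traces a b c d x y z"
    using assms crit by (intro singular_traces_of_xyz_critical) (simp add: fricke_xyz_critical_def)
  moreover have "reducible_traces a b c d x y z" if "reducible_traces d c b a x y z"
    using reducible_traces_perm_badc[OF reducible_traces_perm_cdab[OF that]] .
  ultimately show ?classes unfolding singular_traces_def
    using crit vertex reducible_traces_perm_badc reducible_traces_perm_cdab by blast
next
  assume ?classes
  thus ?crit
    using assms reducible_traces_critical[of a b c d x y z]
    unfolding scalar_at_1_def fricke_dx_def fricke_dy_def fricke_dz_def fricke_da_def
    by (elim disjE exE conjE) (simp_all add: algebra_simps)
qed

section \<open>Chebyshev polynomials\<close>

fun cheb_deriv :: "nat \<Rightarrow> complex \<Rightarrow> complex" where
  "cheb_deriv 0 x = 0"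
| "cheb_deriv (Suc 0) x = 1"
| "cheb_deriv (Suc (Suc n)) x = cheb (Suc n) x + x * cheb_deriv (Suc n) x - cheb_deriv n x"

lemma has_field_derivative_cheb: "(cheb n has_field_derivative cheb_deriv n x) (at x)"
proof (induction n x rule: cheb.induct)
  case (3 n x)
  have "cheb (Suc (Suc n)) = (\<lambda>t. t * cheb (Suc n) t - cheb n t)" by (rule ext) simp
  moreover have "((\<lambda>t. t * cheb (Suc n) t - cheb n t) has_field_derivative
      1 * cheb (Suc n) x + cheb_deriv (Suc n) x * x - cheb_deriv n x) (at x)"
    by (intro DERIV_diff DERIV_mult DERIV_ident 3)
  ultimately show ?case by (simp add: mult.commute)
qed simp_all

lemma has_field_derivative_cheb_comp [derivative_intros]:
  "(f has_field_derivative f') (at x within s) \<Longrightarrow>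
   ((\<lambda>x. cheb n (f x)) has_field_derivative cheb_deriv n (f x) * f') (at x within s)"
  using DERIV_chain2[OF has_field_derivative_cheb] by blast

lemma cheb_plus_inverse: "t \<noteq> 0 \<Longrightarrow> w = t + 1/t \<Longrightarrow> cheb n w = t^n + 1/t^n"
proof (induction n w rule: cheb.induct)
  case (3 n w)
  hence "cheb (Suc (Suc n)) w = (t + 1/t) * (t^Suc n + 1/t^Suc n) - (t^n + 1/t^n)" by simp
  also have "\<dots> = t^Suc (Suc n) + 1/t^Suc (Suc n)" using 3(3) by (simp add: field_simps)
  finally show ?case .
qed auto

lemma cheb_deriv_plus_inverse:
  "t \<noteq> 0 \<Longrightarrow> w = t + 1/t \<Longrightarrow> cheb_deriv n w * (t - 1/t) = of_nat n * (t^n - 1/t^n)"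
proof (induction n w rule: cheb.induct)
  case (3 n w)
  have "cheb_deriv (Suc (Suc n)) w * (t - 1/t) = cheb (Suc n) w * (t - 1/t)
      + w * (cheb_deriv (Suc n) w * (t - 1/t)) - cheb_deriv n w * (t - 1/t)"
    by (simp add: algebra_simps)
  also have "\<dots> = (t^Suc n + 1/t^Suc n) * (t - 1/t)
      + (t + 1/t) * (of_nat (Suc n) * (t^Suc n - 1/t^Suc n)) - of_nat n * (t^n - 1/t^n)"
    using cheb_plus_inverse[OF 3(3,4)] 3(1,2)[OF 3(3,4)] 3(4) by (simp del: of_nat_Suc)
  also have "\<dots> = of_nat (Suc (Suc n)) * (t^Suc (Suc n) - 1/t^Suc (Suc n))"
    using 3(3) by (simp add: field_simps; simp add: algebra_simps)
  finally show ?case .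
qed auto

lemma cheb_2: "cheb n 2 = 2"
  using cheb_plus_inverse[of 1 2 n] by simp

lemma cheb_minus_2: "cheb n (-2) = 2 * (-1)^n"
  using cheb_plus_inverse[of "-1" "-2" n] by (cases "even n") simp_all

lemma cheb_deriv_2: "cheb_deriv n 2 = of_nat (n^2)"
  by (induction n "2::complex" rule: cheb.induct) (simp_all add: cheb_2 power2_eq_square algebra_simps)

lemma cheb_deriv_minus_2: "cheb_deriv n (-2) = (-1)^(n+1) * of_nat (n^2)"
  by (induction n "-2::complex" rule: cheb.induct)
    (simp_all add: cheb_minus_2 power2_eq_square algebra_simps)

text \<open>Over \<open>T\<^sub>N(w) = \<plusminus>2\<close> the critical points of \<open>T\<^sub>N\<close> are exactly the points other than \<open>\<plusminus>2\<close>: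
  with \<open>w = t + t\<^sup>-\<^sup>1\<close> we get \<open>t\<^sup>N = \<plusminus>1\<close>, and \<open>T\<^sub>N'(w) (t - t\<^sup>-\<^sup>1) = N (t\<^sup>N - t\<^sup>-\<^sup>N) = 0\<close>.\<close>
lemma cheb_deriv_eq_0_iff:
  assumes "N > 0" and "cheb N w = 2 \<or> cheb N w = -2"
  shows "cheb_deriv N w = 0 \<longleftrightarrow> w \<noteq> 2 \<and> w \<noteq> -2"
proof
  assume "cheb_deriv N w = 0"
  thus "w \<noteq> 2 \<and> w \<noteq> -2" using assms(1) cheb_deriv_2[of N] cheb_deriv_minus_2[of N] by auto
next
  assume w: "w \<noteq> 2 \<and> w \<noteq> -2"
  obtain t where t: "t \<noteq> 0" "w = t + 1/t" using ex_plus_inverse by blast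
  define u where "u = t^N"
  have "u \<noteq> 0" using t(1) unfolding u_def by simp
  have "u + 1/u = 2 \<or> u + 1/u = -2"
    using assms(2) cheb_plus_inverse[OF t] unfolding u_def by simp
  hence "u*u + 1 = 2*u \<or> u*u + 1 = -2*u" using \<open>u \<noteq> 0\<close> by (auto simp: field_simps)
  hence "(u - 1)*(u - 1) = 0 \<or> (u + 1)*(u + 1) = 0" by algebra
  hence "u*u = 1" by (auto simp: add_eq_0_iff2)
  hence "u - 1/u = 0" using \<open>u \<noteq> 0\<close> by (simp add: field_simps)
  moreover have "t - 1/t \<noteq> 0"
  proof
    assume "t - 1/t = 0"
    hence "t^2 = 1" using t(1) by (simp add: field_simps power2_eq_square)
    thus False using w t(2) by (auto simp: power2_eq_1_iff)
  qed
  ultimately show "cheb_deriv N w = 0"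
    using cheb_deriv_plus_inverse[OF t, of N] unfolding u_def by simp
qed

section \<open>\<open>2 \<times> 2\<close> matrices\<close>

definition m2 :: "complex \<Rightarrow> complex \<Rightarrow> complex \<Rightarrow> complex \<Rightarrow> mat2" where
  "m2 p q r s = vector [vector [p, q], vector [r, s]]"

lemma m2_nth [simp]:
  "m2 p q r s $ 1 $ 1 = p" "m2 p q r s $ 1 $ 2 = q" "m2 p q r s $ 2 $ 1 = r" "m2 p q r s $ 2 $ 2 = s"
  unfolding m2_def by simp_all

lemma m2_cases: obtains p q r s where "M = m2 p q r s"
proof
  show "M = m2 (M$1$1) (M$1$2) (M$2$1) (M$2$2)" unfolding vec_eq_iff forall_2 by simp
qed

lemma m2_eq_iff: "m2 p q r s = m2 p' q' r' s' \<longleftrightarrow> p = p' \<and> q = q' \<and> r = r' \<and> s = s'"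
  by (metis m2_nth)

lemma m2_mult: "m2 a b c d ** m2 e f g h = m2 (a*e + b*g) (a*f + b*h) (c*e + d*g) (c*f + d*h)"
  unfolding vec_eq_iff forall_2 matrix_matrix_mult_def by (simp add: sum_2)

lemma det_m2: "det (m2 p q r s) = p * s - q * r"
  by (simp add: det_2)

lemma tr2_m2: "tr2 (m2 p q r s) = p + s"
  by (simp add: tr2_def)

lemma mat_eq_m2: "mat e = m2 e 0 0 e"
  unfolding vec_eq_iff forall_2 by (simp add: mat_def)

lemma m2_mult_vec:
  "(m2 p q r s *v v) $ 1 = p * v$1 + q * v$2" "(m2 p q r s *v v) $ 2 = r * v$1 + s * v$2"
  by (simp_all add: matrix_vector_mult_def sum_2)

lemma uminus_mat_1: "- mat 1 = (mat (-1) :: mat2)"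
  unfolding vec_eq_iff forall_2 by (simp add: mat_def)

lemma mat_mult_comm: "mat e ** (X::mat2) = X ** mat e"
  by (cases X rule: m2_cases) (simp add: mat_eq_m2 m2_mult algebra_simps)

lemma mat_mult_mat: "mat a ** mat b = (mat (a*b) :: mat2)"
  unfolding mat_eq_m2 m2_mult by simp

lemma det_mat2: "det (mat e :: mat2) = e*e"
  unfolding mat_eq_m2 det_m2 by simp

lemma tr2_mult_comm: "tr2 ((A::mat2) ** B) = tr2 (B ** A)"
  by (cases A rule: m2_cases, cases B rule: m2_cases) (simp add: m2_mult tr2_m2 algebra_simps)

lemma tr2_mat:
  "tr2 (mat e ** (X::mat2)) = e * tr2 X" "tr2 (X ** mat e) = e * tr2 X" "tr2 (mat e) = 2*e"
  by (cases X rule: m2_cases; simp add: mat_eq_m2 m2_mult tr2_m2 algebra_simps)+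

lemma tr2_of_mult_eq_mat:
  fixes P Q :: mat2
  assumes "det P = 1" "P ** Q = mat e"
  shows "tr2 Q = e * tr2 P"
proof -
  obtain p1 p2 p3 p4 where P: "P = m2 p1 p2 p3 p4" by (rule m2_cases)
  obtain q1 q2 q3 q4 where Q: "Q = m2 q1 q2 q3 q4" by (rule m2_cases)
  show ?thesis using assms unfolding P Q m2_mult mat_eq_m2 m2_eq_iff det_m2 tr2_m2 by algebra
qed

lemma mat_mult_eq_1_imp:
  assumes "mat e ** Y = mat 1" "e*e = 1"
  shows "Y = (mat e :: mat2)"
proof -
  have "mat e ** (mat e ** Y) = mat e ** mat 1" using assms(1) by simp
  hence "mat (e*e) ** Y = mat e" by (simp add: matrix_mul_assoc mat_mult_mat)
  thus ?thesis using assms(2) by simp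
qed

lemma mult_eq_mat_commute:
  fixes X Y :: mat2
  assumes "X ** Y = mat e" "e*e = 1"
  shows "Y ** X = mat e"
proof -
  have "X ** (Y ** mat e) = mat 1"
    using assms mat_mult_mat[of e e] by (simp add: matrix_mul_assoc)
  hence "(Y ** mat e) ** X = mat 1" using matrix_left_right_inverse by blast
  hence "mat e ** (Y ** X) = mat 1" by (simp add: matrix_mul_assoc mat_mult_comm)
  thus ?thesis using mat_mult_eq_1_imp assms(2) by blast
qed

definition adjugate2 :: "mat2 \<Rightarrow> mat2" where
  "adjugate2 X = m2 (X$2$2) (-X$1$2) (-X$2$1) (X$1$1)"

lemma adjugate2_props:
  "X ** adjugate2 X = mat (det X)" "det (adjugate2 X) = det X" "tr2 (adjugate2 X) = tr2 X"
  by (cases X rule: m2_cases; simp add: adjugate2_def m2_mult det_m2 tr2_m2 mat_eq_m2 algebra_simps)+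

lemma tr2_mult_adjugate2:
  fixes P Q :: mat2
  assumes "det P = 1" "det Q = 1"
  shows "tr2 (P ** adjugate2 (P ** Q)) = tr2 Q" "tr2 (Q ** adjugate2 (P ** Q)) = tr2 P"
proof -
  obtain p1 p2 p3 p4 where P: "P = m2 p1 p2 p3 p4" by (rule m2_cases)
  obtain q1 q2 q3 q4 where Q: "Q = m2 q1 q2 q3 q4" by (rule m2_cases)
  show "tr2 (P ** adjugate2 (P ** Q)) = tr2 Q" "tr2 (Q ** adjugate2 (P ** Q)) = tr2 P"
    using assms unfolding P Q adjugate2_def m2_mult m2_nth tr2_m2 det_m2 by algebra+
qed

lemma ex_SL2_pair_traces:
  "\<exists>P Q :: mat2. det P = 1 \<and> det Q = 1 \<and> tr2 P = u \<and> tr2 Q = v \<and> tr2 (P ** Q) = t"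
proof -
  obtain \<tau> where \<tau>: "\<tau> \<noteq> 0" "t = \<tau> + 1/\<tau>" using ex_plus_inverse by blast
  show ?thesis
    by (rule exI[of _ "m2 u 1 (-1) 0"], rule exI[of _ "m2 0 (-1/\<tau>) \<tau> v"])
      (use \<tau> in \<open>simp add: det_m2 tr2_m2 m2_mult\<close>)
qed

lemma ex_SL2_triple_traces:
  "\<exists>P Q A :: mat2. det P = 1 \<and> det Q = 1 \<and> det A = 1 \<and> P ** Q ** A = mat 1
     \<and> tr2 P = u \<and> tr2 Q = v \<and> tr2 (P ** Q) = t \<and> tr2 A = t \<and> tr2 (P ** A) = v \<and> tr2 (Q ** A) = u"
proof -
  obtain P Q :: mat2 where PQ: "det P = 1" "det Q = 1" "tr2 P = u" "tr2 Q = v" "tr2 (P ** Q) = t"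
    using ex_SL2_pair_traces by blast
  have "det (P ** Q) = 1" using PQ by (simp add: det_mul)
  thus ?thesis
    using PQ adjugate2_props[of "P ** Q"] tr2_mult_adjugate2[OF PQ(1,2)]
    by (intro exI[of _ P] exI[of _ Q] exI[of _ "adjugate2 (P ** Q)"]) auto
qed

lemma tr2_mult_mat_mult: "tr2 ((X::mat2) ** (mat e ** Y)) = e * tr2 (X ** Y)"
  by (cases X rule: m2_cases, cases Y rule: m2_cases) (simp add: mat_eq_m2 m2_mult tr2_m2 algebra_simps)

section \<open>Representations with a scalar generator, and reducible representations\<close>

definition has_traces :: "(nat \<Rightarrow> mat2) \<Rightarrow> complex \<Rightarrow> complex \<Rightarrow> complex \<Rightarrow> complex \<Rightarrow> complex \<Rightarrow> complex \<Rightarrow> complex \<Rightarrow> bool" where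
  "has_traces M a b c d x y z \<longleftrightarrow> tr2 (M 1) = a \<and> tr2 (M 2) = b \<and> tr2 (M 3) = c \<and> tr2 (M 4) = d
     \<and> tr2 (M 1 ** M 2) = x \<and> tr2 (M 1 ** M 3) = y \<and> tr2 (M 2 ** M 3) = z"

definition rep4 :: "mat2 \<Rightarrow> mat2 \<Rightarrow> mat2 \<Rightarrow> mat2 \<Rightarrow> nat \<Rightarrow> mat2" where
  "rep4 A B C D = (\<lambda>i. if i = 1 then A else if i = 2 then B else if i = 3 then C else D)"

lemma rep4_simps [simp]:
  "rep4 A B C D 1 = A" "rep4 A B C D (Suc 0) = A" "rep4 A B C D 2 = B" "rep4 A B C D 3 = C" "rep4 A B C D 4 = D"
  unfolding rep4_def by simp_all

lemma ball_1_4: "(\<forall>i\<in>{1..4::nat}. P i) \<longleftrightarrow> P 1 \<and> P 2 \<and> P 3 \<and> P 4"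
  by (auto simp: atLeastAtMost_iff le_Suc_eq numeral_eq_Suc)

lemma bex_1_4: "(\<exists>i\<in>{1..4::nat}. P i) \<longleftrightarrow> P 1 \<or> P 2 \<or> P 3 \<or> P 4"
  using ball_1_4[of "\<lambda>i. \<not> P i"] by blast

lemma is_rep_rep4:
  "is_rep (rep4 A B C D) \<longleftrightarrow> det A = 1 \<and> det B = 1 \<and> det C = 1 \<and> det D = 1 \<and> A ** B ** C ** D = mat 1"
  unfolding is_rep_def ball_1_4 rep4_def by simp

lemma is_rep_dets: "is_rep M \<Longrightarrow> det (M 1) = 1 \<and> det (M 2) = 1 \<and> det (M 3) = 1 \<and> det (M 4) = 1"
  unfolding is_rep_def ball_1_4 by blast

lemma ex_rep_scalar_iff:
  "(\<exists>M. is_rep M \<and> (M i = mat 1 \<or> M i = - mat 1) \<and> P M)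
    \<longleftrightarrow> (\<exists>M e. is_rep M \<and> (e = 1 \<or> e = -1) \<and> M i = mat e \<and> P M)"
  using uminus_mat_1 by auto

text \<open>Given \<open>P, Q \<in> SL\<^sub>2\<close> with prescribed traces, inserting \<open>e I\<close> at position i of
  \<open>P, Q, e (PQ)\<^sup>-\<^sup>1\<close> gives a representation with a scalar i-th generator.\<close>
lemma scalar_insert_products:
  fixes P Q A :: mat2
  assumes "e*e = 1"
  shows "mat e ** P ** Q ** (mat e ** A) = P ** Q ** A" "P ** mat e ** Q ** (mat e ** A) = P ** Q ** A"
    "P ** Q ** mat e ** (mat e ** A) = P ** Q ** A" "P ** Q ** (mat e ** A) ** mat e = P ** Q ** A"
proof -
  obtain p1 p2 p3 p4 where P: "P = m2 p1 p2 p3 p4" by (rule m2_cases)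
  obtain q1 q2 q3 q4 where Q: "Q = m2 q1 q2 q3 q4" by (rule m2_cases)
  obtain r1 r2 r3 r4 where A: "A = m2 r1 r2 r3 r4" by (rule m2_cases)
  show "mat e ** P ** Q ** (mat e ** A) = P ** Q ** A" "P ** mat e ** Q ** (mat e ** A) = P ** Q ** A"
    "P ** Q ** mat e ** (mat e ** A) = P ** Q ** A" "P ** Q ** (mat e ** A) ** mat e = P ** Q ** A"
    using assms unfolding P Q A mat_eq_m2 m2_mult m2_eq_iff by (intro conjI; algebra)+
qed

lemma scalar_rep_1_iff:
  "(\<exists>M. is_rep M \<and> (M 1 = mat 1 \<or> M 1 = - mat 1) \<and> has_traces M a b c d x y z)
    \<longleftrightarrow> scalar_at_1 a b c d x y z"
  unfolding ex_rep_scalar_iff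
proof
  assume "\<exists>M e. is_rep M \<and> (e = 1 \<or> e = -1) \<and> M 1 = mat e \<and> has_traces M a b c d x y z"
  then obtain M e where rep: "is_rep M" and e: "e = 1 \<or> e = -1" and M1: "M 1 = mat e"
    and tr: "has_traces M a b c d x y z" by blast
  have "mat e ** (M 2 ** M 3 ** M 4) = mat 1"
    using rep M1 unfolding is_rep_def by (simp add: matrix_mul_assoc)
  hence "M 2 ** M 3 ** M 4 = mat e" using mat_mult_eq_1_imp e by auto
  hence "tr2 (M 4) = e * tr2 (M 2 ** M 3)"
    by (rule tr2_of_mult_eq_mat[rotated]) (use is_rep_dets[OF rep] in \<open>simp add: det_mul\<close>)
  thus "scalar_at_1 a b c d x y z"
    unfolding scalar_at_1_def using tr e M1 tr2_mat
    by (auto simp: has_traces_def)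
next
  assume "scalar_at_1 a b c d x y z"
  then obtain e where e: "e = 1 \<or> e = -1" "a = 2*e" "x = e*b" "y = e*c" "z = e*d"
    unfolding scalar_at_1_def by blast
  obtain P Q A :: mat2 where PQA: "det P = 1" "det Q = 1" "det A = 1" "P ** Q ** A = mat 1"
    "tr2 P = b" "tr2 Q = c" "tr2 (P ** Q) = z" "tr2 A = z"
    using ex_SL2_triple_traces by blast
  have "e*e = 1" using e(1) by auto
  hence "is_rep (rep4 (mat e) P Q (mat e ** A))"
    using PQA scalar_insert_products(1) by (simp add: is_rep_rep4 det_mul det_mat2)
  moreover have "has_traces (rep4 (mat e) P Q (mat e ** A)) a b c d x y z"
    using PQA e by (auto simp: has_traces_def tr2_mat)
  ultimately show "\<exists>M e. is_rep M \<and> (e = 1 \<or> e = -1) \<and> M 1 = mat e \<and> has_traces M a b c d x y z"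
    using e(1) by (intro exI[of _ "rep4 (mat e) P Q (mat e ** A)"] exI[of _ e]) simp
qed

lemma scalar_rep_2_iff:
  "(\<exists>M. is_rep M \<and> (M 2 = mat 1 \<or> M 2 = - mat 1) \<and> has_traces M a b c d x y z)
    \<longleftrightarrow> scalar_at_1 b a d c x y z"
  unfolding ex_rep_scalar_iff
proof
  assume "\<exists>M e. is_rep M \<and> (e = 1 \<or> e = -1) \<and> M 2 = mat e \<and> has_traces M a b c d x y z"
  then obtain M e where rep: "is_rep M" and e: "e = 1 \<or> e = -1" and M2: "M 2 = mat e"
    and tr: "has_traces M a b c d x y z" by blast
  have "M 1 ** M 2 = mat e ** M 1" using M2 mat_mult_comm by simp
  hence "mat e ** (M 1 ** M 3 ** M 4) = mat 1"
    using rep unfolding is_rep_def by (simp add: matrix_mul_assoc)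
  hence "M 1 ** M 3 ** M 4 = mat e" using mat_mult_eq_1_imp e by auto
  hence "tr2 (M 4) = e * tr2 (M 1 ** M 3)"
    by (rule tr2_of_mult_eq_mat[rotated]) (use is_rep_dets[OF rep] in \<open>simp add: det_mul\<close>)
  thus "scalar_at_1 b a d c x y z"
    unfolding scalar_at_1_def using tr e M2 tr2_mat
    by (auto simp: has_traces_def)
next
  assume "scalar_at_1 b a d c x y z"
  then obtain e where e: "e = 1 \<or> e = -1" "b = 2*e" "x = e*a" "y = e*d" "z = e*c"
    unfolding scalar_at_1_def by blast
  obtain P Q A :: mat2 where PQA: "det P = 1" "det Q = 1" "det A = 1" "P ** Q ** A = mat 1"
    "tr2 P = a" "tr2 Q = c" "tr2 (P ** Q) = y" "tr2 A = y"
    using ex_SL2_triple_traces by blast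
  have "e*e = 1" using e(1) by auto
  hence "is_rep (rep4 P (mat e) Q (mat e ** A))"
    using PQA scalar_insert_products(2) by (simp add: is_rep_rep4 det_mul det_mat2)
  moreover have "has_traces (rep4 P (mat e) Q (mat e ** A)) a b c d x y z"
    using PQA e by (auto simp: has_traces_def tr2_mat)
  ultimately show "\<exists>M e. is_rep M \<and> (e = 1 \<or> e = -1) \<and> M 2 = mat e \<and> has_traces M a b c d x y z"
    using e(1) by (intro exI[of _ "rep4 P (mat e) Q (mat e ** A)"] exI[of _ e]) simp
qed

lemma scalar_rep_3_iff:
  "(\<exists>M. is_rep M \<and> (M 3 = mat 1 \<or> M 3 = - mat 1) \<and> has_traces M a b c d x y z)
    \<longleftrightarrow> scalar_at_1 c d a b x y z"
  unfolding ex_rep_scalar_iff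
proof
  assume "\<exists>M e. is_rep M \<and> (e = 1 \<or> e = -1) \<and> M 3 = mat e \<and> has_traces M a b c d x y z"
  then obtain M e where rep: "is_rep M" and e: "e = 1 \<or> e = -1" and M3: "M 3 = mat e"
    and tr: "has_traces M a b c d x y z" by blast
  have "M 1 ** M 2 ** M 3 = mat e ** (M 1 ** M 2)" using M3 mat_mult_comm by simp
  hence "mat e ** (M 1 ** M 2 ** M 4) = mat 1"
    using rep unfolding is_rep_def by (simp add: matrix_mul_assoc)
  hence "M 1 ** M 2 ** M 4 = mat e" using mat_mult_eq_1_imp e by auto
  hence "tr2 (M 4) = e * tr2 (M 1 ** M 2)"
    by (rule tr2_of_mult_eq_mat[rotated]) (use is_rep_dets[OF rep] in \<open>simp add: det_mul\<close>)
  thus "scalar_at_1 c d a b x y z"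
    unfolding scalar_at_1_def using tr e M3 tr2_mat
    by (auto simp: has_traces_def)
next
  assume "scalar_at_1 c d a b x y z"
  then obtain e where e: "e = 1 \<or> e = -1" "c = 2*e" "x = e*d" "y = e*a" "z = e*b"
    unfolding scalar_at_1_def by blast
  obtain P Q A :: mat2 where PQA: "det P = 1" "det Q = 1" "det A = 1" "P ** Q ** A = mat 1"
    "tr2 P = a" "tr2 Q = b" "tr2 (P ** Q) = x" "tr2 A = x"
    using ex_SL2_triple_traces by blast
  have "e*e = 1" using e(1) by auto
  hence "is_rep (rep4 P Q (mat e) (mat e ** A))"
    using PQA scalar_insert_products(3) by (simp add: is_rep_rep4 det_mul det_mat2)
  moreover have "has_traces (rep4 P Q (mat e) (mat e ** A)) a b c d x y z"
    using PQA e by (auto simp: has_traces_def tr2_mat)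
  ultimately show "\<exists>M e. is_rep M \<and> (e = 1 \<or> e = -1) \<and> M 3 = mat e \<and> has_traces M a b c d x y z"
    using e(1) by (intro exI[of _ "rep4 P Q (mat e) (mat e ** A)"] exI[of _ e]) simp
qed

text \<open>Here all three of \<open>M\<^sub>1M\<^sub>2, M\<^sub>3M\<^sub>1, M\<^sub>2M\<^sub>3\<close> are inverse to \<open>e M\<^sub>3, e M\<^sub>2, e M\<^sub>1\<close>.\<close>
lemma scalar_rep_4_iff:
  "(\<exists>M. is_rep M \<and> (M 4 = mat 1 \<or> M 4 = - mat 1) \<and> has_traces M a b c d x y z)
    \<longleftrightarrow> scalar_at_1 d c b a x y z"
  unfolding ex_rep_scalar_iff
proof
  assume "\<exists>M e. is_rep M \<and> (e = 1 \<or> e = -1) \<and> M 4 = mat e \<and> has_traces M a b c d x y z"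
  then obtain M e where rep: "is_rep M" and e: "e = 1 \<or> e = -1" and M4: "M 4 = mat e"
    and tr: "has_traces M a b c d x y z" by blast
  have ee: "e*e = 1" using e by auto
  note dets = is_rep_dets[OF rep]
  have "mat e ** (M 1 ** M 2 ** M 3) = mat 1"
    using rep M4 mat_mult_comm unfolding is_rep_def by simp
  hence M123: "M 1 ** M 2 ** M 3 = mat e" using mat_mult_eq_1_imp ee by blast
  hence "tr2 (M 3) = e * tr2 (M 1 ** M 2)"
    by (rule tr2_of_mult_eq_mat[rotated]) (use dets in \<open>simp add: det_mul\<close>)
  moreover have "M 3 ** M 1 ** M 2 = mat e"
    using mult_eq_mat_commute[OF M123 ee] by (simp add: matrix_mul_assoc)
  hence "tr2 (M 2) = e * tr2 (M 3 ** M 1)"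
    by (rule tr2_of_mult_eq_mat[rotated]) (use dets in \<open>simp add: det_mul\<close>)
  hence "tr2 (M 2) = e * tr2 (M 1 ** M 3)" using tr2_mult_comm[of "M 3" "M 1"] by simp
  moreover have "M 2 ** M 3 ** M 1 = mat e"
    using mult_eq_mat_commute[of "M 1" "M 2 ** M 3"] M123 ee by (simp add: matrix_mul_assoc)
  hence "tr2 (M 1) = e * tr2 (M 2 ** M 3)"
    by (rule tr2_of_mult_eq_mat[rotated]) (use dets in \<open>simp add: det_mul\<close>)
  ultimately show "scalar_at_1 d c b a x y z"
    unfolding scalar_at_1_def using tr e M4 tr2_mat
    by (auto simp: has_traces_def)
next
  assume "scalar_at_1 d c b a x y z"
  then obtain e where e: "e = 1 \<or> e = -1" "d = 2*e" "x = e*c" "y = e*b" "z = e*a"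
    unfolding scalar_at_1_def by blast
  obtain P Q A :: mat2 where PQA: "det P = 1" "det Q = 1" "det A = 1" "P ** Q ** A = mat 1"
    "tr2 P = a" "tr2 Q = b" "tr2 (P ** Q) = x" "tr2 A = x" "tr2 (P ** A) = b" "tr2 (Q ** A) = a"
    using ex_SL2_triple_traces by blast
  have "e*e = 1" using e(1) by auto
  hence "is_rep (rep4 P Q (mat e ** A) (mat e))"
    using PQA scalar_insert_products(4) by (simp add: is_rep_rep4 det_mul det_mat2)
  moreover have "has_traces (rep4 P Q (mat e ** A) (mat e)) a b c d x y z"
    using PQA e by (auto simp: has_traces_def tr2_mat tr2_mult_mat_mult)
  ultimately show "\<exists>M e. is_rep M \<and> (e = 1 \<or> e = -1) \<and> M 4 = mat e \<and> has_traces M a b c d x y z"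
    using e(1) by (intro exI[of _ "rep4 P Q (mat e ** A) (mat e)"] exI[of _ e]) simp
qed

lemma mat2_mult_vec_scaleR: "(A::mat2) *v (k *s v) = k *s (A *v v)"
proof -
  obtain p q r s where A: "A = m2 p q r s" by (rule m2_cases)
  show ?thesis unfolding A by (simp add: vec_eq_iff forall_2 m2_mult_vec algebra_simps)
qed

lemma eigenvector_mult:
  assumes "(A::mat2) *v v = a *s v" "B *v v = b *s v"
  shows "(A ** B) *v v = (a*b) *s v"
  using assms by (simp add: matrix_vector_mul_assoc[symmetric] mat2_mult_vec_scaleR mult.commute)

lemma tr2_of_eigenvalue:
  assumes "det (M::mat2) = 1" "v \<noteq> 0" "M *v v = c *s v"
  shows "c \<noteq> 0 \<and> tr2 M = c + 1/c"
proof -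
  obtain p q r s where M: "M = m2 p q r s" by (rule m2_cases)
  have e1: "p * v$1 + q * v$2 = c * v$1" and e2: "r * v$1 + s * v$2 = c * v$2"
    using assms(3) unfolding M vec_eq_iff forall_2 m2_mult_vec by auto
  have d: "p * s - q * r = 1" using assms(1) unfolding M det_m2 .
  have "(c*c - (p + s)*c + 1) * v$1 = 0" "(c*c - (p + s)*c + 1) * v$2 = 0"
    using e1 e2 d by algebra+
  moreover have "v$1 \<noteq> 0 \<or> v$2 \<noteq> 0" using assms(2) unfolding vec_eq_iff forall_2 by simp
  ultimately have E: "c*c - (p + s)*c + 1 = 0" by auto
  hence "c \<noteq> 0" by auto
  moreover have "p + s = c + 1/c" using E \<open>c \<noteq> 0\<close> by (simp add: field_simps)
  ultimately show ?thesis unfolding M tr2_m2 by simp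
qed

lemma reducible_rep_iff:
  "(\<exists>M. is_rep M \<and> reducible_rep M \<and> has_traces M a b c d x y z) \<longleftrightarrow> reducible_traces a b c d x y z"
proof
  assume "\<exists>M. is_rep M \<and> reducible_rep M \<and> has_traces M a b c d x y z"
  then obtain M v where rep: "is_rep M" and v: "v \<noteq> 0" "\<forall>i\<in>{1..4}. \<exists>c. M i *v v = c *s v"
    and tr: "has_traces M a b c d x y z" unfolding reducible_rep_def by blast
  obtain c1 c2 c3 c4 where c: "M 1 *v v = c1 *s v" "M 2 *v v = c2 *s v" "M 3 *v v = c3 *s v"
    "M 4 *v v = c4 *s v" using v(2) unfolding ball_1_4 by blast
  note dets = is_rep_dets[OF rep]
  have eig: "k \<noteq> 0 \<and> tr2 A = k + 1/k" if "det A = 1" "A *v v = k *s v" for A k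
    using tr2_of_eigenvalue[OF that(1) v(1) that(2)] .
  have "(c1*c2*c3*c4) *s v = 1 *s v"
    using eigenvector_mult[OF eigenvector_mult[OF eigenvector_mult[OF c(1,2)] c(3)] c(4)] rep
    unfolding is_rep_def by simp
  hence "c1*c2*c3*c4 = 1" using v(1) by (metis vector_mul_rcancel)
  moreover have nz: "c1 \<noteq> 0" "c2 \<noteq> 0" "c3 \<noteq> 0"
    using eig[OF _ c(1)] eig[OF _ c(2)] eig[OF _ c(3)] dets by auto
  ultimately have "c4 = 1/(c1*c2*c3)" by (simp add: field_simps)
  moreover have "a = c1 + 1/c1" "b = c2 + 1/c2" "c = c3 + 1/c3" "d = c4 + 1/c4"
    "x = c1*c2 + 1/(c1*c2)" "y = c1*c3 + 1/(c1*c3)" "z = c2*c3 + 1/(c2*c3)"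
    using tr[unfolded has_traces_def] eig[OF _ c(1)] eig[OF _ c(2)] eig[OF _ c(3)] eig[OF _ c(4)]
      eig[OF _ eigenvector_mult[OF c(1,2)]] eig[OF _ eigenvector_mult[OF c(1,3)]]
      eig[OF _ eigenvector_mult[OF c(2,3)]] dets
    by (simp_all add: det_mul)
  ultimately show "reducible_traces a b c d x y z"
    unfolding reducible_traces_def using nz
    by (rule_tac x = c1 in exI, rule_tac x = c2 in exI, rule_tac x = c3 in exI) simp
next
  assume "reducible_traces a b c d x y z"
  then obtain \<alpha> \<beta> \<gamma> where h: "\<alpha> \<noteq> 0" "\<beta> \<noteq> 0" "\<gamma> \<noteq> 0"
    "a = \<alpha> + 1/\<alpha>" "b = \<beta> + 1/\<beta>" "c = \<gamma> + 1/\<gamma>" "d = \<alpha>*\<beta>*\<gamma> + 1/(\<alpha>*\<beta>*\<gamma>)"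
    "x = \<alpha>*\<beta> + 1/(\<alpha>*\<beta>)" "y = \<alpha>*\<gamma> + 1/(\<alpha>*\<gamma>)" "z = \<beta>*\<gamma> + 1/(\<beta>*\<gamma>)"
    unfolding reducible_traces_def by blast
  define diag where "diag t = m2 t 0 0 (1/t)" for t
  define M where "M = rep4 (diag \<alpha>) (diag \<beta>) (diag \<gamma>) (diag (1/(\<alpha>*\<beta>*\<gamma>)))"
  have "is_rep M"
    unfolding M_def is_rep_rep4 diag_def det_m2 m2_mult mat_eq_m2 m2_eq_iff using h(1-3) by simp
  moreover have "reducible_rep M" unfolding reducible_rep_def
  proof (intro exI[of _ "vector [1, 0] :: complex^2"] conjI ballI)
    show "(vector [1, 0] :: complex^2) \<noteq> 0" unfolding vec_eq_iff forall_2 by simp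
    fix i :: nat assume "i \<in> {1..4}"
    show "\<exists>k. M i *v vector [1, 0] = k *s vector [1, 0]"
      by (intro exI[of _ "M i $ 1 $ 1"]) (simp add: M_def rep4_def diag_def vec_eq_iff forall_2 m2_mult_vec)
  qed
  moreover have "has_traces M a b c d x y z"
    unfolding has_traces_def M_def rep4_simps diag_def tr2_m2 m2_mult using h by (simp add: field_simps)
  ultimately show "\<exists>M. is_rep M \<and> reducible_rep M \<and> has_traces M a b c d x y z" by blast
qed

section \<open>Singular points of Z\<close>

lemma Zfun_eq_fricke:
  "Zfun N z0 z1 zi w = fricke (- cheb N (w 1)) (- cheb N (w 2)) (- cheb N (w 3)) (- cheb N (w 4))
     (-z0) (-z1) (-zi)"
  unfolding Zfun_def Hpoly_def fricke_def Let_def by (simp add: algebra_simps power2_eq_square)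

lemma has_field_derivative_Zfun:
  fixes N z0 z1 zi w
  defines "a \<equiv> - cheb N (w 1)" and "b \<equiv> - cheb N (w 2)" and "c \<equiv> - cheb N (w 3)"
    and "d \<equiv> - cheb N (w 4)" and "x \<equiv> -z0" and "y \<equiv> -z1" and "z \<equiv> -zi"
  shows "((\<lambda>t. Zfun N t z1 zi w) has_field_derivative - fricke_dx a b c d x y z) (at z0)"
    and "((\<lambda>t. Zfun N z0 t zi w) has_field_derivative - fricke_dy a b c d x y z) (at z1)"
    and "((\<lambda>t. Zfun N z0 z1 t w) has_field_derivative - fricke_dz a b c d x y z) (at zi)"
    and "((\<lambda>t. Zfun N z0 z1 zi (w(1 := t))) has_field_derivative
          - fricke_da a b c d x y z * cheb_deriv N (w 1)) (at (w 1))"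
    and "((\<lambda>t. Zfun N z0 z1 zi (w(2 := t))) has_field_derivative
          - fricke_da b a d c x y z * cheb_deriv N (w 2)) (at (w 2))"
    and "((\<lambda>t. Zfun N z0 z1 zi (w(3 := t))) has_field_derivative
          - fricke_da c d a b x y z * cheb_deriv N (w 3)) (at (w 3))"
    and "((\<lambda>t. Zfun N z0 z1 zi (w(4 := t))) has_field_derivative
          - fricke_da d c b a x y z * cheb_deriv N (w 4)) (at (w 4))"
  unfolding assms Zfun_def Hpoly_def fricke_dx_def fricke_dy_def fricke_dz_def fricke_da_def Let_def
  by (auto intro!: derivative_eq_intros simp: algebra_simps power2_eq_square)

lemma singular_Z_iff:
  fixes N z0 z1 zi w
  defines "a \<equiv> - cheb N (w 1)" and "b \<equiv> - cheb N (w 2)" and "c \<equiv> - cheb N (w 3)"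
    and "d \<equiv> - cheb N (w 4)" and "x \<equiv> -z0" and "y \<equiv> -z1" and "z \<equiv> -zi"
  shows "singular_Z N z0 z1 zi w \<longleftrightarrow> fricke a b c d x y z = 0
    \<and> (fricke_dx a b c d x y z = 0 \<and> fricke_dy a b c d x y z = 0 \<and> fricke_dz a b c d x y z = 0
      \<and> fricke_da a b c d x y z * cheb_deriv N (w 1) = 0 \<and> fricke_da b a d c x y z * cheb_deriv N (w 2) = 0
      \<and> fricke_da c d a b x y z * cheb_deriv N (w 3) = 0 \<and> fricke_da d c b a x y z * cheb_deriv N (w 4) = 0)"
proof -
  have zero_deriv_iff: "(f has_field_derivative 0) (at t) \<longleftrightarrow> D = 0"
    if "(f has_field_derivative D) (at t)" for f :: "complex \<Rightarrow> complex" and D t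
    using that DERIV_unique by blast
  show ?thesis
    unfolding singular_Z_def inZ_def ball_1_4
      zero_deriv_iff[OF has_field_derivative_Zfun(1)] zero_deriv_iff[OF has_field_derivative_Zfun(2)]
      zero_deriv_iff[OF has_field_derivative_Zfun(3)] zero_deriv_iff[OF has_field_derivative_Zfun(4)]
      zero_deriv_iff[OF has_field_derivative_Zfun(5)] zero_deriv_iff[OF has_field_derivative_Zfun(6)]
      zero_deriv_iff[OF has_field_derivative_Zfun(7)]
    unfolding Zfun_eq_fricke assms by simp
qed

lemma character_of_iff:
  "character_of N z0 z1 zi w M \<longleftrightarrow> has_traces M (- cheb N (w 1)) (- cheb N (w 2)) (- cheb N (w 3))
     (- cheb N (w 4)) (-z0) (-z1) (-zi)"
  unfolding character_of_def has_traces_def ball_1_4 by auto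

lemma ordN_pos:
  assumes "root_of_unity q"
  shows "ordN q > 0"
proof -
  obtain n :: nat where n: "n > 0" "q^n = 1" using assms unfolding root_of_unity_def by blast
  hence "(q^4)^n = 1" by (metis power_mult mult.commute power_one)
  with n(1) have "\<exists>k::nat. k > 0 \<and> (q^4)^k = 1" by blast
  thus ?thesis unfolding ordN_def by (rule LeastI2_ex) auto
qed

lemma scalar_at_1_and_cheb_deriv_eq_0_iff:
  assumes "N > 0"
  shows "scalar_at_1 (- cheb N v) b c d x y z \<and> cheb_deriv N v = 0
    \<longleftrightarrow> scalar_at_1 (- cheb N v) b c d x y z \<and> v \<noteq> 2 \<and> v \<noteq> -2"
proof -
  have "cheb_deriv N v = 0 \<longleftrightarrow> v \<noteq> 2 \<and> v \<noteq> -2" if "scalar_at_1 (- cheb N v) b c d x y z"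
  proof (rule cheb_deriv_eq_0_iff[OF assms])
    show "cheb N v = 2 \<or> cheb N v = -2"
      using that unfolding scalar_at_1_def by (auto simp: minus_equation_iff[of "cheb N v"])
  qed
  thus ?thesis by blast
qed

lemma ex_conj_const: "(\<exists>M. P M \<and> Q M \<and> R M \<and> C) \<longleftrightarrow> (\<exists>M. P M \<and> Q M \<and> R M) \<and> C"
  by blast

theorem mainTheorem16:
  fixes q :: complex and z0 z1 zi :: complex and w :: "nat \<Rightarrow> complex"
  assumes "root_of_unity q"
    and "inZ (ordN q) z0 z1 zi w"
  shows "singular_Z (ordN q) z0 z1 zi w \<longleftrightarrow>
    ((\<exists>i\<in>{1..4}. \<exists>M. is_rep M \<and> (M i = mat 1 \<or> M i = - mat 1)
        \<and> character_of (ordN q) z0 z1 zi w M \<and> w i \<noteq> 2 \<and> w i \<noteq> -2)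
     \<or> (\<exists>M. is_rep M \<and> reducible_rep M \<and> character_of (ordN q) z0 z1 zi w M))"
proof -
  define N where "N = ordN q"
  have N: "N > 0" using ordN_pos[OF assms(1)] unfolding N_def .
  define a b c d where "a = - cheb N (w 1)" and "b = - cheb N (w 2)" and "c = - cheb N (w 3)"
    and "d = - cheb N (w 4)"
  define x y z where "x = - z0" and "y = - z1" and "z = - zi"
  have F: "fricke a b c d x y z = 0"
    using assms(2) unfolding inZ_def Zfun_eq_fricke N_def[symmetric] a_def b_def c_def d_def x_def y_def z_def .
  have singular_Z_iff_traces: "singular_Z N z0 z1 zi w \<longleftrightarrow> fricke a b c d x y z = 0
    \<and> (fricke_dx a b c d x y z = 0 \<and> fricke_dy a b c d x y z = 0 \<and> fricke_dz a b c d x y z = 0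
      \<and> fricke_da a b c d x y z * cheb_deriv N (w 1) = 0 \<and> fricke_da b a d c x y z * cheb_deriv N (w 2) = 0
      \<and> fricke_da c d a b x y z * cheb_deriv N (w 3) = 0 \<and> fricke_da d c b a x y z * cheb_deriv N (w 4) = 0)"
    unfolding a_def b_def c_def d_def x_def y_def z_def by (rule singular_Z_iff)
  have "singular_Z N z0 z1 zi w \<longleftrightarrow> reducible_traces a b c d x y z
      \<or> scalar_at_1 a b c d x y z \<and> cheb_deriv N (w 1) = 0 \<or> scalar_at_1 b a d c x y z \<and> cheb_deriv N (w 2) = 0
      \<or> scalar_at_1 c d a b x y z \<and> cheb_deriv N (w 3) = 0 \<or> scalar_at_1 d c b a x y z \<and> cheb_deriv N (w 4) = 0"
    unfolding singular_Z_iff_traces fricke_critical_iff[OF F] using F by simp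
  also have "\<dots> \<longleftrightarrow> reducible_traces a b c d x y z
      \<or> scalar_at_1 a b c d x y z \<and> w 1 \<noteq> 2 \<and> w 1 \<noteq> -2 \<or> scalar_at_1 b a d c x y z \<and> w 2 \<noteq> 2 \<and> w 2 \<noteq> -2
      \<or> scalar_at_1 c d a b x y z \<and> w 3 \<noteq> 2 \<and> w 3 \<noteq> -2 \<or> scalar_at_1 d c b a x y z \<and> w 4 \<noteq> 2 \<and> w 4 \<noteq> -2"
    unfolding a_def b_def c_def d_def scalar_at_1_and_cheb_deriv_eq_0_iff[OF N] by (rule refl)
  finally show ?thesis
    unfolding N_def[symmetric] bex_1_4 character_of_iff a_def[symmetric] b_def[symmetric]
      c_def[symmetric] d_def[symmetric] x_def[symmetric] y_def[symmetric] z_def[symmetric]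
      ex_conj_const scalar_rep_1_iff scalar_rep_2_iff scalar_rep_3_iff scalar_rep_4_iff reducible_rep_iff
    by blast
qed
end
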